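(* Fix $b\in\mathbb{N}$. For $(r,s)\in L=\mathbb{N}\times\mathbb{N}$ define \[ \Lambda(r,s)=|\{(n,m)\in L : (n,m)\text{ is } b\text{-visible and } |n-r|+|m-s|=1\}|. \] Then the mean value $M(\Lambda)$ exists and $M(\Lambda)=\dfrac{4}{\zeta(b+1)}$, where $\zeta$ is the Riemann zeta function.
   Context: For $r,s\in\mathbb{N}$, $\gcd_b(r,s)=\max\{k\in\mathbb{N} : k\mid r \text{ and } k^b\mid s\}$; $(r,s)$ is $b$-visible if $\gcd_b(r,s)=1$. The mean value of $\Lambda:L\to\mathbb{C}$ is $M(\Lambda)=\lim_{N\to\infty}\frac{1}{N^2}\sum_{0<r,s\le N}\Lambda(r,s)$. *)

theory Defs
  imports "HOL-Analysis.Analysis"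
begin

definition gcd_b :: "nat \<Rightarrow> nat \<Rightarrow> nat \<Rightarrow> nat" where
  "gcd_b b r s = Max {k. 0 < k \<and> k dvd r \<and> k ^ b dvd s}"

definition b_visible :: "nat \<Rightarrow> nat \<Rightarrow> nat \<Rightarrow> bool" where
  "b_visible b r s \<longleftrightarrow> gcd_b b r s = 1"

definition Lambda :: "nat \<Rightarrow> nat \<Rightarrow> nat \<Rightarrow> nat" where
  "Lambda b r s = card {(n, m). 0 < n \<and> 0 < m \<and> b_visible b n m \<and>
       \<bar>int n - int r\<bar> + \<bar>int m - int s\<bar> = 1}"

definition zeta_nat :: "nat \<Rightarrow> real" where
  "zeta_nat s = (\<Sum>n. 1 / real (Suc n) ^ s)"

definition has_mean_value :: "(nat \<Rightarrow> nat \<Rightarrow> real) \<Rightarrow> real \<Rightarrow> bool" where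
  "has_mean_value f c \<longleftrightarrow>
     (\<lambda>N. (\<Sum>r\<in>{1..N}. \<Sum>s\<in>{1..N}. f r s) / real N ^ 2) \<longlonglongrightarrow> c"

end

(* A pair is b-visible iff no d > 1 has d | r and d^b | s, so Moebius inversion turns the
   indicator of b-visible points into a sum over d of mu(d) [d | r] [d^b | s].  Summing over
   the square [1,N]^2 counts about N^2 Sum_d mu(d)/d^(b+1) visible points, with error
   O(N log N), and the Dirichlet-series identity (Sum mu(d)/d^s) zeta(s) = 1 identifies the
   density as 1/zeta(b+1).  Finally Lambda(r,s) is the sum of the visibility indicator over
   the four neighbours of (r,s), and each of the four shifted sums over the square differs
   from the visible count only along one edge, i.e. by at most N. *)

theory Submission
  imports Defs "HOL-Computational_Algebra.Squarefree" "HOL-Real_Asymp.Real_Asymp"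
begin

definition moebius_mu :: "nat \<Rightarrow> real" where
  "moebius_mu d = (if squarefree d then (-1) ^ card (prime_factors d) else 0)"

lemma abs_moebius_mu_le: "\<bar>moebius_mu d\<bar> \<le> 1"
  by (simp add: moebius_mu_def)

lemma moebius_mu_prime_mult:
  assumes p: "prime p" and "\<not> p dvd d" and "d > 0"
  shows "moebius_mu (p * d) = - moebius_mu d"
proof (cases "squarefree d")
  case True
  have "coprime p d" using assms by (simp add: prime_imp_coprime)
  then have "squarefree (p * d)"
    using squarefree_mult_coprime squarefree_prime[OF p] True by blast
  moreover have "prime_factors (p * d) = insert p (prime_factors d)"
    using assms by (simp add: prime_factors_product prime_prime_factors)
  moreover have "p \<notin> prime_factors d"
    using assms by (auto dest: in_prime_factors_imp_dvd)
  ultimately show ?thesis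
    using True by (simp add: moebius_mu_def)
next
  case False
  then show ?thesis
    using squarefree_multD(2) by (fastforce simp: moebius_mu_def)
qed

lemma sum_moebius_mu_divisors:
  assumes "n > 0"
  shows "(\<Sum>d | d dvd n. moebius_mu d) = (if n = 1 then 1 else 0)"
proof (cases "n = 1")
  case True
  then show ?thesis by (simp add: moebius_mu_def)
next
  case False
  then obtain p where p: "prime p" "p dvd n"
    using assms prime_factor_nat by blast
  define A where "A = {d. d dvd n \<and> \<not> p dvd d}"
  define B where "B = {d. d dvd n \<and> p dvd d}"
  have fin: "finite A" "finite B"
    using assms by (auto simp: A_def B_def)
  have A_pos: "d > 0" if "d \<in> A" for d
    using that assms by (auto simp: A_def intro: dvd_pos_nat)
  have "(*) p ` A \<subseteq> B"
    using p by (auto simp: A_def B_def prime_imp_coprime divides_mult)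
  moreover have "moebius_mu x = 0" if "x \<in> B - (*) p ` A" for x
  proof -
    have "p dvd x"
      using that by (simp add: B_def)
    then obtain e where e: "x = p * e" ..
    then have "p dvd e"
      using that by (auto simp: A_def B_def intro: dvd_mult_right)
    then have "p ^ 2 dvd x"
      using e by (auto simp: power2_eq_square)
    then have "\<not> squarefree x"
      using p(1) not_prime_unit not_squarefreeI by blast
    then show ?thesis by (simp add: moebius_mu_def)
  qed
  ultimately have "(\<Sum>d\<in>B. moebius_mu d) = (\<Sum>d\<in>(*) p ` A. moebius_mu d)"
    by (intro sum.mono_neutral_right fin) auto
  also have "\<dots> = (\<Sum>d\<in>A. moebius_mu (p * d))"
    using p by (subst sum.reindex) (auto simp: inj_on_def prime_gt_0_nat)
  also have "\<dots> = - (\<Sum>d\<in>A. moebius_mu d)"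
    using p A_pos by (simp add: moebius_mu_prime_mult A_def sum_negf)
  finally have "(\<Sum>d\<in>A \<union> B. moebius_mu d) = 0"
    using fin by (subst sum.union_disjoint) (auto simp: A_def B_def)
  moreover have "A \<union> B = {d. d dvd n}"
    by (auto simp: A_def B_def)
  ultimately show ?thesis
    using False by simp
qed

lemma lcm_power_nat: "lcm (a ^ n) (b ^ n) = lcm a b ^ n" for a b :: nat
proof (cases "gcd a b = 0")
  case True
  then show ?thesis by (cases n) auto
next
  case False
  have "lcm (a ^ n) (b ^ n) * gcd a b ^ n = lcm a b ^ n * gcd a b ^ n"
    by (metis gcd_exp prod_gcd_lcm_nat mult.commute power_mult_distrib)
  then show ?thesis
    using False by auto
qed

lemma gcd_b_greatest:
  assumes "n > 0"
  shows "gcd_b b n m > 0" "gcd_b b n m dvd n" "gcd_b b n m ^ b dvd m"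
    and "0 < k \<Longrightarrow> k dvd n \<Longrightarrow> k ^ b dvd m \<Longrightarrow> k \<le> gcd_b b n m"
proof -
  let ?S = "{k. 0 < k \<and> k dvd n \<and> k ^ b dvd m}"
  have fin: "finite ?S"
    by (rule finite_subset[of _ "{k. k dvd n}"]) (use assms in auto)
  have "1 \<in> ?S" by simp
  then have "gcd_b b n m \<in> ?S"
    unfolding gcd_b_def using Max_in[OF fin] by blast
  then show "gcd_b b n m > 0" "gcd_b b n m dvd n" "gcd_b b n m ^ b dvd m"
    by auto
  show "k \<le> gcd_b b n m" if "0 < k" "k dvd n" "k ^ b dvd m"
    unfolding gcd_b_def using Max_ge[OF fin] that by blast
qed

text \<open>The maximum defining \<open>gcd_b\<close> is also the greatest element for divisibility,
  because \<open>k \<mapsto> lcm k g\<close> preserves the defining conditions.\<close>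

lemma dvd_gcd_b_iff:
  assumes n: "n > 0"
  shows "k dvd gcd_b b n m \<longleftrightarrow> 0 < k \<and> k dvd n \<and> k ^ b dvd m"
proof
  let ?g = "gcd_b b n m"
  note g = gcd_b_greatest[OF n, where b = b and m = m]
  assume k: "0 < k \<and> k dvd n \<and> k ^ b dvd m"
  have "lcm k ?g ^ b dvd m"
    using k g by (simp add: lcm_power_nat[symmetric])
  then have "lcm k ?g \<le> ?g"
    using k g by (intro g(4)) (auto simp: lcm_pos_nat)
  moreover have "?g \<le> lcm k ?g"
    using k g by (simp add: dvd_imp_le lcm_pos_nat)
  ultimately have "lcm k ?g = ?g" by simp
  then show "k dvd ?g"
    by (metis dvd_lcm1)
next
  assume "k dvd gcd_b b n m"
  then show "0 < k \<and> k dvd n \<and> k ^ b dvd m"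
    using gcd_b_greatest[OF n, where b = b and m = m]
    by (auto intro: dvd_pos_nat dvd_trans dvd_power_same)
qed

lemma sum_over_multiples:
  fixes f :: "nat \<Rightarrow> 'a::comm_monoid_add"
  assumes d: "d > 0"
  shows "(\<Sum>n=1..N. if d dvd n then f n else 0) = (\<Sum>k=1..N div d. f (d * k))"
proof -
  have "{n\<in>{1..N}. d dvd n} = (*) d ` {1..N div d}"
  proof (intro set_eqI iffI)
    fix n assume "n \<in> {n\<in>{1..N}. d dvd n}"
    then obtain k where "n = d * k" "1 \<le> d * k" "d * k \<le> N"
      by (auto elim!: dvdE)
    moreover from this have "1 \<le> k" "k \<le> N div d"
      using d by (auto simp: less_eq_div_iff_mult_less_eq mult.commute intro: Suc_leI)
    ultimately show "n \<in> (*) d ` {1..N div d}" by auto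
  next
    fix n assume "n \<in> (*) d ` {1..N div d}"
    then show "n \<in> {n\<in>{1..N}. d dvd n}"
      using d by (auto simp: less_eq_div_iff_mult_less_eq mult.commute)
  qed
  then have "(\<Sum>n=1..N. if d dvd n then f n else 0) = sum f ((*) d ` {1..N div d})"
    by (simp add: sum.inter_filter[symmetric])
  also have "\<dots> = (\<Sum>k=1..N div d. f (d * k))"
    using d by (subst sum.reindex) (auto simp: inj_on_def)
  finally show ?thesis .
qed

lemma count_multiples:
  assumes "d > 0"
  shows "(\<Sum>n=1..N. if d dvd n then 1 else 0) = (of_nat (N div d) :: 'a::semiring_1)"
  using sum_over_multiples[OF assms, of "\<lambda>_. 1 :: 'a" N] by simp

lemma real_div_bounds:
  assumes "d > 0"
  shows "real N / real d - 1 < real (N div d)" "real (N div d) \<le> real N / real d"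
proof -
  have "real N / real d = real (N div d) + real (N mod d) / real d"
    by (rule of_nat_of_nat_div_aux)
  moreover have "0 \<le> real (N mod d) / real d" "real (N mod d) / real d < 1"
    using assms by simp_all
  ultimately show "real N / real d - 1 < real (N div d)" "real (N div d) \<le> real N / real d"
    by linarith+
qed

lemma div_mult_div_approx:
  assumes "d > 0" "e > 0"
  shows "\<bar>real (N div d) * real (N div e) - real N ^ 2 / (real d * real e)\<bar>
           \<le> real N / real d + real N / real e"
proof -
  define x y where "x = real N / real d" and "y = real N / real e"
  define q1 q2 where "q1 = real (N div d)" and "q2 = real (N div e)"
  note bounds = real_div_bounds[OF assms(1), of N, folded x_def q1_def]
    real_div_bounds[OF assms(2), of N, folded y_def q2_def]
  have "0 \<le> x" "0 \<le> q2"
    by (simp_all add: x_def q2_def)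
  then have "0 \<le> x * (y - q2)" "x * (y - q2) \<le> x" "0 \<le> q2 * (x - q1)" "q2 * (x - q1) \<le> q2"
    using bounds by (auto intro: mult_left_le)
  moreover have "real N ^ 2 / (real d * real e) - q1 * q2 = x * (y - q2) + q2 * (x - q1)"
    by (simp add: x_def y_def power2_eq_square algebra_simps)
  ultimately have "\<bar>q1 * q2 - real N ^ 2 / (real d * real e)\<bar> \<le> x + y"
    using bounds unfolding abs_le_iff by linarith
  then show ?thesis
    by (simp only: q1_def q2_def x_def y_def)
qed

lemma LIMSEQ_harm_div: "(\<lambda>N. harm N / real N :: real) \<longlonglongrightarrow> 0"
proof -
  have "(\<lambda>N. (harm N - ln (real N)) * (1 / real N) + ln (real N) / real N :: real)
          \<longlonglongrightarrow> euler_mascheroni * 0 + 0"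
    by (intro tendsto_intros euler_mascheroni_LIMSEQ)
  then show ?thesis
    by (simp add: diff_divide_distrib)
qed

lemma tendsto_by_error_bound:
  fixes f g :: "'a \<Rightarrow> 'b::real_normed_vector"
  assumes "eventually (\<lambda>x. norm (f x - g x) \<le> e x) F" "(e \<longlongrightarrow> 0) F" "(g \<longlongrightarrow> L) F"
  shows "(f \<longlongrightarrow> L) F"
  using Lim_transform[OF assms(3) Lim_null_comparison[OF assms(1,2)]] .

lemma summable_zeta_nat:
  assumes "s \<ge> 2"
  shows "summable (\<lambda>n. 1 / real (Suc n) ^ s)"
proof -
  have "summable (\<lambda>n. inverse (real n ^ s))"
    by (rule inverse_power_summable[OF assms])
  then show ?thesis
    by (subst (asm) summable_Suc_iff[symmetric]) (simp add: divide_inverse)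
qed

text \<open>The tail \<open>\<Sum>k>K. 1/k^s\<close> is dominated by the telescoping series \<open>\<Sum>k>K. 1/(k-1) - 1/k\<close>.\<close>

lemma zeta_nat_tail_bounds:
  assumes s: "s \<ge> 2" and K: "K \<ge> 1"
  shows "0 \<le> zeta_nat s - (\<Sum>k=1..K. 1 / real k ^ s)"
    and "zeta_nat s - (\<Sum>k=1..K. 1 / real k ^ s) \<le> 1 / real K"
proof -
  define g where "g n = 1 / real (Suc n) ^ s" for n
  define h where "h n = 1 / real (n + K)" for n
  have "zeta_nat s = (\<Sum>n. g (n + K)) + (\<Sum>n<K. g n)"
    unfolding zeta_nat_def g_def
    by (rule suminf_split_initial_segment[OF summable_zeta_nat[OF s]])
  moreover have "(\<Sum>k=1..K. 1 / real k ^ s) = (\<Sum>n<K. g n)"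
    unfolding g_def by (induction K) (auto simp: atLeastAtMostSuc_conv)
  ultimately have tail: "zeta_nat s - (\<Sum>k=1..K. 1 / real k ^ s) = (\<Sum>n. g (n + K))"
    by simp
  have summable_tail: "summable (\<lambda>n. g (n + K))"
    unfolding g_def by (rule summable_ignore_initial_segment[OF summable_zeta_nat[OF s]])
  show "0 \<le> zeta_nat s - (\<Sum>k=1..K. 1 / real k ^ s)"
    unfolding tail by (rule suminf_nonneg[OF summable_tail]) (simp add: g_def)
  have "h \<longlonglongrightarrow> 0"
    unfolding h_def by real_asymp
  then have telescope: "(\<lambda>n. h n - h (Suc n)) sums h 0"
    using telescope_sums' by fastforce
  have "g (n + K) \<le> h n - h (Suc n)" for n
  proof -
    define x where "x = real (n + K)"
    have x: "x \<ge> 1" using K by (simp add: x_def)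
    have "x * (x + 1) \<le> (x + 1) ^ 2"
      using x by (simp add: power2_eq_square)
    also have "\<dots> \<le> (x + 1) ^ s"
      using x s by (intro power_increasing) auto
    finally have "1 / (x + 1) ^ s \<le> 1 / (x * (x + 1))"
      using x by (intro frac_le) auto
    moreover have "h n - h (Suc n) = 1 / (x * (x + 1))"
      using x by (simp add: h_def x_def field_simps)
    ultimately show ?thesis
      by (simp add: g_def x_def add_ac)
  qed
  then have "(\<Sum>n. g (n + K)) \<le> h 0"
    using suminf_le[OF _ summable_tail sums_summable[OF telescope]] sums_unique[OF telescope]
    by simp
  then show "zeta_nat s - (\<Sum>k=1..K. 1 / real k ^ s) \<le> 1 / real K"
    unfolding tail by (simp add: h_def)
qed

definition moebius_partial_sum :: "nat \<Rightarrow> nat \<Rightarrow> real" where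
  "moebius_partial_sum s D = (\<Sum>d=1..D. moebius_mu d / real d ^ s)"

lemma moebius_zeta_truncated_product:
  assumes "D \<ge> 1"
  shows "(\<Sum>d=1..D. moebius_mu d / real d ^ s * (\<Sum>k=1..D div d. 1 / real k ^ s)) = 1"
proof -
  have divisor_sum: "(\<Sum>d=1..D. if d dvd n then moebius_mu d else 0) = (if n = 1 then 1 else 0)"
    if "n \<in> {1..D}" for n
  proof -
    have "{d\<in>{1..D}. d dvd n} = {d. d dvd n}"
      using that by (auto dest: dvd_imp_le intro: dvd_pos_nat)
    then show ?thesis
      using that by (simp add: sum.inter_filter[symmetric] sum_moebius_mu_divisors)
  qed
  have "(\<Sum>d=1..D. moebius_mu d / real d ^ s * (\<Sum>k=1..D div d. 1 / real k ^ s))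
      = (\<Sum>d=1..D. \<Sum>k=1..D div d. moebius_mu d / real (d * k) ^ s)"
    by (simp add: sum_distrib_left power_mult_distrib)
  also have "\<dots> = (\<Sum>d=1..D. \<Sum>n=1..D. if d dvd n then moebius_mu d / real n ^ s else 0)"
    by (intro sum.cong refl sum_over_multiples[symmetric]) auto
  also have "\<dots> = (\<Sum>n=1..D. \<Sum>d=1..D. if d dvd n then moebius_mu d / real n ^ s else 0)"
    by (rule sum.swap)
  also have "\<dots> = (\<Sum>n=1..D. 1 / real n ^ s * (\<Sum>d=1..D. if d dvd n then moebius_mu d else 0))"
    by (simp add: sum_distrib_left if_distrib cong: if_cong)
  also have "\<dots> = (\<Sum>n=1..D. if n = 1 then 1 else 0)"
    by (intro sum.cong refl) (simp only: divisor_sum, simp)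
  also have "\<dots> = 1"
    using assms by simp
  finally show ?thesis .
qed

lemma moebius_zeta_tail_term_le:
  assumes s: "s \<ge> 2" and d: "1 \<le> d" "d \<le> D"
  shows "\<bar>moebius_mu d / real d ^ s * (zeta_nat s - (\<Sum>k=1..D div d. 1 / real k ^ s))\<bar>
           \<le> 2 / real D * inverse (real d)"
proof -
  define q where "q = D div d"
  have q: "q \<ge> 1"
    using d unfolding q_def by (simp add: Suc_le_eq div_greater_zero_iff)
  have "d * q + D mod d = D" "D mod d < d" "d \<le> d * q"
    using d q by (simp_all add: q_def)
  then have "D \<le> 2 * d * q"
    by linarith
  then have D_le: "real D \<le> 2 * real d * real q"
    by (metis of_nat_le_iff of_nat_mult of_nat_numeral)
  have "\<bar>moebius_mu d / real d ^ s\<bar> \<le> 1 / real d ^ s"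
    by (simp add: divide_right_mono abs_moebius_mu_le)
  also have "\<dots> \<le> 1 / real d ^ 2"
    using d s by (intro divide_left_mono power_increasing) auto
  finally have "\<bar>moebius_mu d / real d ^ s * (zeta_nat s - (\<Sum>k=1..q. 1 / real k ^ s))\<bar>
      \<le> 1 / real d ^ 2 * (1 / real q)"
    unfolding abs_mult using zeta_nat_tail_bounds[OF s q] by (intro mult_mono) auto
  also have "\<dots> \<le> 2 / real D * inverse (real d)"
    using D_le d q by (simp add: field_simps power2_eq_square)
  finally show ?thesis
    by (simp add: q_def)
qed

lemma moebius_partial_sum_zeta_approx:
  assumes s: "s \<ge> 2" and D: "D \<ge> 1"
  shows "\<bar>moebius_partial_sum s D * zeta_nat s - 1\<bar> \<le> 2 * harm D / real D"
proof -
  have "moebius_partial_sum s D * zeta_nat s - 1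
      = (\<Sum>d=1..D. moebius_mu d / real d ^ s * zeta_nat s)
        - (\<Sum>d=1..D. moebius_mu d / real d ^ s * (\<Sum>k=1..D div d. 1 / real k ^ s))"
    unfolding moebius_zeta_truncated_product[OF D] moebius_partial_sum_def
    by (simp add: sum_distrib_right)
  also have "\<dots> = (\<Sum>d=1..D. moebius_mu d / real d ^ s * (zeta_nat s - (\<Sum>k=1..D div d. 1 / real k ^ s)))"
    by (simp add: sum_subtractf[symmetric] right_diff_distrib)
  also have "\<bar>\<dots>\<bar> \<le> (\<Sum>d=1..D. 2 / real D * inverse (real d))"
    using moebius_zeta_tail_term_le[OF s] by (intro order.trans[OF sum_abs] sum_mono) auto
  also have "\<dots> = 2 * harm D / real D"
    by (simp add: harm_def sum_distrib_left sum_divide_distrib)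
  finally show ?thesis .
qed

theorem LIMSEQ_moebius_partial_sum:
  assumes "s \<ge> 2"
  shows "moebius_partial_sum s \<longlonglongrightarrow> 1 / zeta_nat s"
proof -
  have "\<forall>\<^sub>F D in sequentially.
          norm (moebius_partial_sum s D * zeta_nat s - 1) \<le> 2 * harm D / real D"
    using eventually_ge_at_top[of 1]
    by eventually_elim (use moebius_partial_sum_zeta_approx[OF assms] in auto)
  moreover have "(\<lambda>D. 2 * harm D / real D) \<longlonglongrightarrow> 0"
    using tendsto_mult_right_zero[OF LIMSEQ_harm_div, of 2] by simp
  ultimately have product: "(\<lambda>D. moebius_partial_sum s D * zeta_nat s) \<longlonglongrightarrow> 1"
    by (rule tendsto_by_error_bound) simp
  have "zeta_nat s \<noteq> 0"
  proof
    assume "zeta_nat s = 0"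
    with product show False
      by (simp add: LIMSEQ_const_iff)
  qed
  then show ?thesis
    using tendsto_divide[OF product tendsto_const[of "zeta_nat s"]] by simp
qed

definition visible_indicator :: "nat \<Rightarrow> nat \<Rightarrow> nat \<Rightarrow> real" where
  "visible_indicator b n m = (if 0 < n \<and> 0 < m \<and> b_visible b n m then 1 else 0)"

lemma visible_indicator_moebius:
  assumes "0 < n" "n \<le> N" "0 < m"
  shows "visible_indicator b n m
           = (\<Sum>d=1..N. if d dvd n \<and> d ^ b dvd m then moebius_mu d else 0)"
proof -
  have "{d\<in>{1..N}. d dvd n \<and> d ^ b dvd m} = {d. d dvd gcd_b b n m}"
    using assms by (auto simp: dvd_gcd_b_iff dest: dvd_imp_le)
  then have "(\<Sum>d=1..N. if d dvd n \<and> d ^ b dvd m then moebius_mu d else 0)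
      = (\<Sum>d | d dvd gcd_b b n m. moebius_mu d)"
    by (simp add: sum.inter_filter[symmetric])
  also have "\<dots> = (if gcd_b b n m = 1 then 1 else 0)"
    by (rule sum_moebius_mu_divisors[OF gcd_b_greatest(1)[OF assms(1)]])
  finally show ?thesis
    using assms by (simp add: visible_indicator_def b_visible_def)
qed

definition visible_count :: "nat \<Rightarrow> nat \<Rightarrow> real" where
  "visible_count b N = (\<Sum>n=1..N. \<Sum>m=1..N. visible_indicator b n m)"

lemma visible_count_moebius:
  "visible_count b N = (\<Sum>d=1..N. moebius_mu d * real (N div d) * real (N div d ^ b))"
proof -
  have "visible_count b N
      = (\<Sum>n=1..N. \<Sum>m=1..N. \<Sum>d=1..N. if d dvd n \<and> d ^ b dvd m then moebius_mu d else 0)"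
    unfolding visible_count_def by (intro sum.cong refl visible_indicator_moebius) auto
  also have "\<dots> = (\<Sum>d=1..N. \<Sum>n=1..N. \<Sum>m=1..N. if d dvd n \<and> d ^ b dvd m then moebius_mu d else 0)"
    by (subst sum.swap[of _ "{1..N}" "{1..N}"]) (rule sum.swap)
  also have "\<dots> = (\<Sum>d=1..N. \<Sum>n=1..N. \<Sum>m=1..N.
                     moebius_mu d * ((if d dvd n then 1 else 0) * (if d ^ b dvd m then 1 else 0)))"
    by (intro sum.cong refl) simp
  also have "\<dots> = (\<Sum>d=1..N. moebius_mu d * ((\<Sum>n=1..N. if d dvd n then 1 else 0)
                                            * (\<Sum>m=1..N. if d ^ b dvd m then 1 else 0)))"
    unfolding sum_product by (simp only: sum_distrib_left)
  also have "\<dots> = (\<Sum>d=1..N. moebius_mu d * real (N div d) * real (N div d ^ b))"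
  proof (intro sum.cong refl)
    fix d assume "d \<in> {1..N}"
    then have "d > 0" "d ^ b > 0" by auto
    then show "moebius_mu d * ((\<Sum>n=1..N. if d dvd n then 1 else 0) * (\<Sum>m=1..N. if d ^ b dvd m then 1 else 0))
        = moebius_mu d * real (N div d) * real (N div d ^ b)"
      by (simp only: count_multiples mult.assoc)
  qed
  finally show ?thesis .
qed

lemma div_mult_div_power_approx:
  assumes "d \<ge> 1" "b \<ge> 1"
  shows "\<bar>real (N div d) * real (N div d ^ b) - real N ^ 2 / real d ^ Suc b\<bar> \<le> 2 * real N / real d"
proof -
  have "d \<le> d ^ b"
    using assms by (simp add: self_le_power)
  then have "real N / real (d ^ b) \<le> real N / real d"
    using assms by (intro divide_left_mono) auto
  then show ?thesis
    using div_mult_div_approx[of d "d ^ b" N] assms by simp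
qed

lemma visible_count_approx:
  assumes b: "b \<ge> 1" and N: "N \<ge> 1"
  shows "\<bar>visible_count b N / real N ^ 2 - moebius_partial_sum (Suc b) N\<bar> \<le> 2 * harm N / real N"
proof -
  have term_bound: "\<bar>moebius_mu d * (real (N div d) * real (N div d ^ b) - real N ^ 2 / real d ^ Suc b)\<bar>
      \<le> 2 * real N * inverse (real d)" if "d \<in> {1..N}" for d
  proof -
    have "\<bar>moebius_mu d * (real (N div d) * real (N div d ^ b) - real N ^ 2 / real d ^ Suc b)\<bar>
        \<le> \<bar>real (N div d) * real (N div d ^ b) - real N ^ 2 / real d ^ Suc b\<bar>"
      unfolding abs_mult by (rule mult_left_le_one_le) (simp_all add: abs_moebius_mu_le)
    also have "\<dots> \<le> 2 * real N / real d"
      using that b by (intro div_mult_div_power_approx) auto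
    finally show ?thesis
      by (simp add: divide_inverse)
  qed
  have "\<bar>visible_count b N - real N ^ 2 * moebius_partial_sum (Suc b) N\<bar>
      = \<bar>\<Sum>d=1..N. moebius_mu d * (real (N div d) * real (N div d ^ b) - real N ^ 2 / real d ^ Suc b)\<bar>"
    by (simp add: visible_count_moebius moebius_partial_sum_def sum_distrib_left
        sum_subtractf[symmetric] algebra_simps)
  also have "\<dots> \<le> (\<Sum>d=1..N. 2 * real N * inverse (real d))"
    using term_bound by (intro order.trans[OF sum_abs] sum_mono)
  also have "\<dots> = 2 * real N * harm N"
    by (simp add: harm_def sum_distrib_left)
  finally have diff: "\<bar>visible_count b N - real N ^ 2 * moebius_partial_sum (Suc b) N\<bar>
                        \<le> 2 * real N * harm N" .
  have "\<bar>visible_count b N / real N ^ 2 - moebius_partial_sum (Suc b) N\<bar>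
      = \<bar>visible_count b N - real N ^ 2 * moebius_partial_sum (Suc b) N\<bar> / real N ^ 2"
    using N by (simp add: field_simps)
  also have "\<dots> \<le> 2 * real N * harm N / real N ^ 2"
    using diff by (rule divide_right_mono) simp
  also have "\<dots> = 2 * harm N / real N"
    by (simp add: power2_eq_square)
  finally show ?thesis .
qed

theorem LIMSEQ_visible_count:
  assumes "b \<ge> 1"
  shows "(\<lambda>N. visible_count b N / real N ^ 2) \<longlonglongrightarrow> 1 / zeta_nat (Suc b)"
proof (rule tendsto_by_error_bound)
  show "\<forall>\<^sub>F N in sequentially.
          norm (visible_count b N / real N ^ 2 - moebius_partial_sum (Suc b) N) \<le> 2 * harm N / real N"
    using eventually_ge_at_top[of 1]
    by eventually_elim (use visible_count_approx[OF assms] in auto)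
  show "(\<lambda>N. 2 * harm N / real N) \<longlonglongrightarrow> 0"
    using tendsto_mult_right_zero[OF LIMSEQ_harm_div, of 2] by simp
  show "moebius_partial_sum (Suc b) \<longlonglongrightarrow> 1 / zeta_nat (Suc b)"
    using assms by (intro LIMSEQ_moebius_partial_sum) simp
qed

text \<open>For \<open>r = 1\<close> the truncated \<open>r - 1\<close> is \<open>0\<close>, where the indicator vanishes, so no
  boundary case is needed.\<close>

lemma Lambda_eq_neighbours:
  assumes "r \<ge> 1" "s \<ge> 1"
  shows "real (Lambda b r s) = visible_indicator b (r + 1) s + visible_indicator b (r - 1) s
                             + visible_indicator b r (s + 1) + visible_indicator b r (s - 1)"
proof -
  define Q where "Q = {(r + 1, s), (r - 1, s), (r, s + 1), (r, s - 1)}"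
  define V where "V x = visible_indicator b (fst x) (snd x)" for x
  have "{(n, m). 0 < n \<and> 0 < m \<and> b_visible b n m \<and> \<bar>int n - int r\<bar> + \<bar>int m - int s\<bar> = 1}
      = {x\<in>Q. V x = 1}"
    using assms by (auto simp: Q_def V_def visible_indicator_def abs_if split: if_splits)
  then have "real (Lambda b r s) = (\<Sum>x\<in>Q. if V x = 1 then 1 else 0)"
    unfolding Lambda_def by (subst sum.inter_filter[symmetric]) (simp_all add: Q_def)
  also have "\<dots> = (\<Sum>x\<in>Q. V x)"
    by (intro sum.cong refl) (simp add: V_def visible_indicator_def)
  also have "\<dots> = visible_indicator b (r + 1) s + visible_indicator b (r - 1) s
                 + visible_indicator b r (s + 1) + visible_indicator b r (s - 1)"
    using assms by (simp add: Q_def V_def)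
  finally show ?thesis .
qed

lemma abs_sum_shift_le:
  fixes f :: "nat \<Rightarrow> real"
  assumes "\<And>n. 0 \<le> f n" "\<And>n. f n \<le> 1"
  shows "\<bar>(\<Sum>s=1..N. f (s + 1)) - (\<Sum>s=1..N. f s)\<bar> \<le> 1"
    and "\<bar>(\<Sum>s=1..N. f (s - 1)) - (\<Sum>s=1..N. f s)\<bar> \<le> 1"
proof -
  have "(\<Sum>s=1..N. f (s + 1)) - (\<Sum>s=1..N. f s) = f (N + 1) - f 1"
    by (induction N) (simp_all add: atLeastAtMostSuc_conv)
  then show "\<bar>(\<Sum>s=1..N. f (s + 1)) - (\<Sum>s=1..N. f s)\<bar> \<le> 1"
    using assms[of "N + 1"] assms[of 1] by (simp add: abs_le_iff)
  have "(\<Sum>s=1..N. f (s - 1)) - (\<Sum>s=1..N. f s) = f 0 - f N"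
    by (induction N) (simp_all add: atLeastAtMostSuc_conv)
  then show "\<bar>(\<Sum>s=1..N. f (s - 1)) - (\<Sum>s=1..N. f s)\<bar> \<le> 1"
    using assms[of 0] assms[of N] by (simp add: abs_le_iff)
qed

lemma sum_Lambda_approx:
  "\<bar>(\<Sum>r=1..N. \<Sum>s=1..N. real (Lambda b r s)) - 4 * visible_count b N\<bar> \<le> 4 * real N"
proof -
  let ?V = "visible_indicator b"
  have close: "\<bar>(\<Sum>r=1..N. g r) - (\<Sum>r=1..N. h r)\<bar> \<le> real N"
    if "\<And>r. \<bar>g r - h r\<bar> \<le> 1" for g h :: "nat \<Rightarrow> real"
  proof -
    have "\<bar>(\<Sum>r=1..N. g r) - (\<Sum>r=1..N. h r)\<bar> \<le> (\<Sum>r=1..N. \<bar>g r - h r\<bar>)"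
      unfolding sum_subtractf[symmetric] by (rule sum_abs)
    also have "\<dots> \<le> (\<Sum>r=1..N. 1)"
      by (intro sum_mono that)
    finally show ?thesis by simp
  qed
  have V: "0 \<le> ?V n m" "?V n m \<le> 1" for n m
    by (simp_all add: visible_indicator_def)
  have W: "visible_count b N = (\<Sum>s=1..N. \<Sum>r=1..N. ?V r s)"
    unfolding visible_count_def by (rule sum.swap)
  have "\<bar>(\<Sum>s=1..N. \<Sum>r=1..N. ?V (r + 1) s) - visible_count b N\<bar> \<le> real N"
       "\<bar>(\<Sum>s=1..N. \<Sum>r=1..N. ?V (r - 1) s) - visible_count b N\<bar> \<le> real N"
    unfolding W by (intro close abs_sum_shift_le V)+
  moreover have "(\<Sum>r=1..N. \<Sum>s=1..N. ?V (r + 1) s) = (\<Sum>s=1..N. \<Sum>r=1..N. ?V (r + 1) s)"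
       "(\<Sum>r=1..N. \<Sum>s=1..N. ?V (r - 1) s) = (\<Sum>s=1..N. \<Sum>r=1..N. ?V (r - 1) s)"
    by (rule sum.swap)+
  moreover have "\<bar>(\<Sum>r=1..N. \<Sum>s=1..N. ?V r (s + 1)) - visible_count b N\<bar> \<le> real N"
       "\<bar>(\<Sum>r=1..N. \<Sum>s=1..N. ?V r (s - 1)) - visible_count b N\<bar> \<le> real N"
    unfolding visible_count_def by (intro close abs_sum_shift_le V)+
  moreover have "(\<Sum>r=1..N. \<Sum>s=1..N. real (Lambda b r s))
      = (\<Sum>r=1..N. \<Sum>s=1..N. ?V (r + 1) s) + (\<Sum>r=1..N. \<Sum>s=1..N. ?V (r - 1) s)
        + (\<Sum>r=1..N. \<Sum>s=1..N. ?V r (s + 1)) + (\<Sum>r=1..N. \<Sum>s=1..N. ?V r (s - 1))"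
    by (simp add: Lambda_eq_neighbours sum.distrib)
  ultimately show ?thesis
    by linarith
qed

theorem mainTheorem7:
  fixes b :: nat
  assumes "b \<ge> 1"
  shows "has_mean_value (\<lambda>r s. real (Lambda b r s)) (4 / zeta_nat (b + 1))"
proof -
  let ?S = "\<lambda>N. \<Sum>r=1..N. \<Sum>s=1..N. real (Lambda b r s)"
  have "\<forall>\<^sub>F N in sequentially. norm (?S N / real N ^ 2 - 4 * (visible_count b N / real N ^ 2)) \<le> 4 / real N"
    using eventually_gt_at_top[of 0]
  proof eventually_elim
    case (elim N)
    have "norm (?S N / real N ^ 2 - 4 * (visible_count b N / real N ^ 2))
        = \<bar>?S N - 4 * visible_count b N\<bar> / real N ^ 2"
      by (simp add: diff_divide_distrib[symmetric])
    also have "\<dots> \<le> 4 * real N / real N ^ 2"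
      using sum_Lambda_approx by (rule divide_right_mono) simp
    also have "\<dots> = 4 / real N"
      by (simp add: power2_eq_square)
    finally show ?case .
  qed
  moreover have "(\<lambda>N. 4 / real N) \<longlonglongrightarrow> 0"
    by real_asymp
  moreover have "(\<lambda>N. 4 * (visible_count b N / real N ^ 2)) \<longlonglongrightarrow> 4 * (1 / zeta_nat (Suc b))"
    using LIMSEQ_visible_count[OF assms] by (rule tendsto_mult_left)
  ultimately have "(\<lambda>N. ?S N / real N ^ 2) \<longlonglongrightarrow> 4 * (1 / zeta_nat (Suc b))"
    by (rule tendsto_by_error_bound)
  then show ?thesis
    by (simp add: has_mean_value_def)
qed

end
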